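(* Fix a shift $G$ for a nonempty configuration. In one outer iteration of the inter-level sampler, the probability that level $\ell$ is accepted (returned) is exactly $W_\ell2^G/A(G)$. Consequently, the probability that the outer iteration accepts some level is $M(G)/A(G)$.
   Context: Fix an integer $b\ge 2$. There is a set $\mathcal L$ of $N$ levels, which are consecutive integers. Each level $\ell$ holds a finite (possibly empty) multiset of normalized significands, each an integer in $[2^{b-1},2^b)$. Let $z$ be the total number of stored significands over all levels; assume $z<2^b$. For each level, $SS_\ell$ is the sum of its significands (so $SS_\ell=0$ iff the level is empty); set $SS_\ell=0$ for integers $\ell\notin\mathcal L$. The level weight is $W_\ell=SS_\ell2^\ell$. For an integer global shift $G$, $A_\ell(G)=\lfloor W_\ell2^G\rfloor+1$ if $SS_\ell>0$ and $A_\ell(G)=0$ if $SS_\ell=0$; $A(G)=\sum_\ell A_\ell(G)$ and $M(G)=\sum_\ell W_\ell2^G$. The configuration is nonempty if $z\ge1$. Inter-level sampler (Algorithm 1), with shift $G$ and $A=A(G)$: it performs independent outer iterations. In an outer iteration, draw $x$ uniformly from $\{1,\dots,A\}$ and scan the levels in decreasing order starting from the largest nonempty level. At the current level $\ell$: if $x<A_\ell(G)$, return $\ell$; if $x=A_\ell(G)$, run the refinement loop for $m=1,2,\dots$: draw $r$ uniformly from $\{0,\dots,2^b-1\}$ independently, let $t=\lfloor SS_\ell 2^{\ell+G+mb}\rfloor \bmod 2^b$; if $r<t$ return $\ell$; else if $r>t$ or $\ell+G+mb\ge 0$, abandon this outer iteration and start a new one; otherwise continue with $m+1$. If $x>A_\ell(G)$,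 set $x\leftarrow x-A_\ell(G)$ and move to the next lower level. *)

theory Defs
  imports "HOL-Probability.Probability"
begin

definition SSof :: "int \<Rightarrow> int \<Rightarrow> (int \<Rightarrow> nat multiset) \<Rightarrow> int \<Rightarrow> nat" where
  "SSof lo hi S l = (if l \<in> {lo..hi} then sum_mset (S l) else 0)"

definition Wlev :: "(int \<Rightarrow> nat) \<Rightarrow> int \<Rightarrow> real" where
  "Wlev SS l = real (SS l) * 2 powr real_of_int l"

definition Alev :: "(int \<Rightarrow> nat) \<Rightarrow> int \<Rightarrow> int \<Rightarrow> int" where
  "Alev SS G l = (if SS l > 0 then \<lfloor>Wlev SS l * 2 powr real_of_int G\<rfloor> + 1 else 0)"

definition Atot :: "int \<Rightarrow> int \<Rightarrow> (int \<Rightarrow> nat) \<Rightarrow> int \<Rightarrow> int" where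
  "Atot lo hi SS G = (\<Sum>l\<in>{lo..hi}. Alev SS G l)"

definition Mtot :: "int \<Rightarrow> int \<Rightarrow> (int \<Rightarrow> nat) \<Rightarrow> int \<Rightarrow> real" where
  "Mtot lo hi SS G = (\<Sum>l\<in>{lo..hi}. Wlev SS l * 2 powr real_of_int G)"

definition tdig :: "nat \<Rightarrow> (int \<Rightarrow> nat) \<Rightarrow> int \<Rightarrow> int \<Rightarrow> nat \<Rightarrow> int" where
  "tdig b SS G l m =
     \<lfloor>real (SS l) * 2 powr real_of_int (l + G + int m * int b)\<rfloor> mod 2 ^ b"

(* Refinement loop at level l, starting at index m: True = return l, False = abandon.
   (The guard b = 0 is only there to make the recursion obviously terminating; b \<ge> 2 in the theorem.) *)
function refine :: "nat \<Rightarrow> (int \<Rightarrow> nat) \<Rightarrow> int \<Rightarrow> int \<Rightarrow> nat \<Rightarrow> bool pmf" where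
  "refine b SS G l m =
     bind_pmf (pmf_of_set {0..<2 ^ b})
       (\<lambda>r. if int r < tdig b SS G l m then return_pmf True
            else if int r > tdig b SS G l m \<or> l + G + int m * int b \<ge> 0 \<or> b = 0
              then return_pmf False
            else refine b SS G l (m + 1))"
  by auto
termination
  by (relation "Wellfounded.measure (\<lambda>(b, SS, G, l, m). nat (- (l + G + int m * int b)))") auto

(* Downward scan over the levels (given in decreasing order) with current value x;
   result Some l = return l, None = abandon this outer iteration. *)
fun scan :: "nat \<Rightarrow> (int \<Rightarrow> nat) \<Rightarrow> int \<Rightarrow> int list \<Rightarrow> int \<Rightarrow> int option pmf" where
  "scan b SS G [] x = return_pmf None"
| "scan b SS G (l # ls) x =
     (if x < Alev SS G l then return_pmf (Some l)
      else if x = Alev SS G l then map_pmf (\<lambda>acc. if acc then Some l else None) (refine b SS G l 1)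
      else scan b SS G ls (x - Alev SS G l))"

definition outer_iter :: "nat \<Rightarrow> int \<Rightarrow> int \<Rightarrow> (int \<Rightarrow> nat) \<Rightarrow> int \<Rightarrow> int option pmf" where
  "outer_iter b lo hi SS G =
     bind_pmf (pmf_of_set {1..Atot lo hi SS G})
       (\<lambda>x. scan b SS G (dropWhile (\<lambda>l. SS l = 0) (rev [lo..hi])) x)"

end

(*
  Write w = W_l 2^G. The refinement loop at level l reads the base-2^b digits t_1, t_2, ... of w after the point
  one at a time; its acceptance probability p_m from digit m on satisfies
  p_m = (t_m + p_{m+1}) / 2^b, and the loop stops exactly when the remaining tail is an integer,
  so p_1 = frac w. Level l owns a block of A_l(G) = floor w + 1 consecutive values of x: the first
  floor w accept at once and the last one accepts with probability frac w, for a total mass of w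
  among the A(G) equally likely draws.
*)

theory Submission
  imports Defs
begin

(* The defining equation of refine has refine on its right-hand side; unfold it only on demand. *)
declare refine.simps [simp del]

lemma frac_divide_mult:
  fixes z :: real and n :: int
  assumes "n > 0"
  shows "frac (z / n) * n = \<lfloor>z\<rfloor> mod n + frac z"
proof -
  have n: "real_of_int n \<noteq> 0"
    using assms by simp
  have "\<lfloor>z / n\<rfloor> = \<lfloor>z\<rfloor> div n"
    using assms by (simp add: floor_divide_real_eq_div)
  hence "frac (z / n) * n = z - real_of_int (\<lfloor>z\<rfloor> div n) * n"
    using n by (simp add: frac_def left_diff_distrib)
  moreover have "real_of_int \<lfloor>z\<rfloor> = real_of_int (\<lfloor>z\<rfloor> div n * n + \<lfloor>z\<rfloor> mod n)"
    by simp
  hence "real_of_int \<lfloor>z\<rfloor> = real_of_int (\<lfloor>z\<rfloor> div n) * n + real_of_int (\<lfloor>z\<rfloor> mod n)"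
    by (simp only: of_int_add of_int_mult)
  moreover have "frac z = z - \<lfloor>z\<rfloor>"
    by (simp add: frac_def)
  ultimately show ?thesis
    by linarith
qed

lemma frac_of_nat_mult_powr:
  assumes "E \<ge> 0"
  shows "frac (real n * 2 powr real_of_int E) = 0"
proof -
  have "real n * 2 powr real_of_int E = real (n * 2 ^ nat E)"
    using assms by (simp add: powr_realpow[symmetric])
  thus ?thesis by (metis frac_eq_0_iff Ints_of_nat)
qed

lemma sum_threshold_uniform:
  fixes t :: nat and q :: real
  assumes "t < N"
  shows "(\<Sum>r<N. (if r < t then 1 else if r = t then q else 0)) = real t + q"
proof -
  let ?f = "\<lambda>r. if r < t then 1 else if r = t then q else 0"
  have split: "{..<N} = {..<t} \<union> insert t {Suc t..<N}"
    using assms by auto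
  have "sum ?f {..<N} = sum ?f {..<t} + sum ?f (insert t {Suc t..<N})"
    unfolding split by (rule sum.union_disjoint) auto
  also have "sum ?f (insert t {Suc t..<N}) = q + sum ?f {Suc t..<N}"
    by (subst sum.insert) auto
  also have "sum ?f {Suc t..<N} = 0"
    by (rule sum.neutral) simp
  finally show ?thesis by simp
qed

lemma pmf_refine_True_step:
  "pmf (refine b SS G l m) True
     = (tdig b SS G l m
        + (if l + G + int m * int b \<ge> 0 \<or> b = 0 then 0 else pmf (refine b SS G l (m + 1)) True))
       / 2 ^ b"
proof -
  define t where "t = tdig b SS G l m"
  define q where
    "q = (if l + G + int m * int b \<ge> 0 \<or> b = 0 then 0 else pmf (refine b SS G l (m + 1)) True)"
  have t: "0 \<le> t" "nat t < 2 ^ b"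
    unfolding t_def tdig_def by (auto simp: nat_less_iff)
  have "pmf (refine b SS G l m) True
      = (\<Sum>r<2 ^ b. pmf (if int r < t then return_pmf True
            else if int r > t \<or> l + G + int m * int b \<ge> 0 \<or> b = 0 then return_pmf False
            else refine b SS G l (m + 1)) True) / 2 ^ b"
    unfolding t_def
    by (subst refine.simps[of b SS G l m], subst pmf_bind_pmf_of_set)
       (auto simp: atLeast0LessThan[symmetric])
  also have "\<dots> = (\<Sum>r<2 ^ b. (if r < nat t then 1 else if r = nat t then q else 0)) / 2 ^ b"
    using t(1) by (auto simp: q_def intro!: sum.cong)
  finally show ?thesis
    using sum_threshold_uniform[OF t(2)] t(1) unfolding q_def t_def by simp
qed

lemma pmf_refine_True:
  assumes "b > 0"
  shows "pmf (refine b SS G l m) True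
       = frac (real (SS l) * 2 powr real_of_int (l + G + int m * int b) / 2 ^ b)"
  using assms
proof (induction b SS G l m rule: refine.induct)
  case (1 b SS G l m)
  define E where "E = l + G + int m * int b"
  define z where "z = real (SS l) * 2 powr real_of_int E"
  have t: "0 \<le> tdig b SS G l m" "nat (tdig b SS G l m) < 2 ^ b"
    unfolding tdig_def by (auto simp: nat_less_iff)
  have tdig_z: "tdig b SS G l m = \<lfloor>z\<rfloor> mod 2 ^ b"
    unfolding tdig_def z_def E_def ..
  have "real_of_int (l + G + int (m + 1) * int b) = real_of_int E + real b"
    unfolding E_def by (simp add: algebra_simps)
  hence next_z: "real (SS l) * 2 powr real_of_int (l + G + int (m + 1) * int b) / 2 ^ b = z"
    unfolding z_def by (simp add: powr_add powr_realpow)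
  have "pmf (refine b SS G l m) True = (tdig b SS G l m + frac z) / 2 ^ b"
  proof (cases "E \<ge> 0")
    case True
    then show ?thesis
      unfolding pmf_refine_True_step[of b SS G l m] E_def[symmetric] z_def
      using frac_of_nat_mult_powr[OF True] by simp
  next
    case False
    \<comment> \<open>the loop continues exactly on the draw r = t\<close>
    have "pmf (refine b SS G l (m + 1)) True = frac z"
      using "1.IH"[of "nat (tdig b SS G l m)"] "1.prems" t False next_z by (simp add: E_def)
    then show ?thesis
      unfolding pmf_refine_True_step[of b SS G l m] E_def[symmetric]
      using False "1.prems" by simp
  qed
  also have "\<dots> = frac (z / 2 ^ b)"
  proof -
    have "frac (z / 2 ^ b) * 2 ^ b = tdig b SS G l m + frac z"
      using frac_divide_mult[of "2 ^ b" z] by (simp add: tdig_z)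
    thus ?thesis
      by (simp add: divide_eq_eq)
  qed
  finally show ?case unfolding z_def E_def .
qed

lemma pmf_refine_one_True:
  assumes "b > 0"
  shows "pmf (refine b SS G l 1) True = frac (Wlev SS l * 2 powr real_of_int G)"
proof -
  have "real (SS l) * 2 powr real_of_int (l + G + int 1 * int b) / 2 ^ b
      = Wlev SS l * 2 powr real_of_int G"
    by (simp add: Wlev_def powr_add powr_realpow[symmetric])
  thus ?thesis
    unfolding pmf_refine_True[OF assms] by (rule arg_cong)
qed

lemma Alev_nonneg: "Alev SS G l \<ge> 0"
  unfolding Alev_def Wlev_def by auto

lemma pmf_map_if_Some:
  "pmf (map_pmf (\<lambda>acc. if acc then Some y else None) p) (Some x)
     = (if x = y then pmf p True else 0)"
proof -
  have "(\<lambda>acc. if acc then Some y else None) -` {Some x} = (if x = y then {True} else {})"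
    by (auto split: if_splits)
  thus ?thesis by (simp add: pmf_map measure_pmf_single)
qed

lemma sum_pmf_scan_head:
  assumes "b > 0"
  shows "(\<Sum>x\<in>{1..Alev SS G l0}. pmf (scan b SS G (l0 # ls) x) (Some l))
       = (if l = l0 then Wlev SS l0 * 2 powr real_of_int G else 0)"
proof (cases "SS l0 = 0")
  case True
  then show ?thesis by (simp add: Alev_def Wlev_def)
next
  case False
  define w where "w = Wlev SS l0 * 2 powr real_of_int G"
  have a: "Alev SS G l0 = \<lfloor>w\<rfloor> + 1" "\<lfloor>w\<rfloor> \<ge> 0"
    using False by (simp_all add: Alev_def w_def Wlev_def)
  have "{1..Alev SS G l0} = insert (Alev SS G l0) {1..\<lfloor>w\<rfloor>}"
    using a by auto
  hence "(\<Sum>x\<in>{1..Alev SS G l0}. pmf (scan b SS G (l0 # ls) x) (Some l))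
      = pmf (scan b SS G (l0 # ls) (Alev SS G l0)) (Some l)
        + (\<Sum>x\<in>{1..\<lfloor>w\<rfloor>}. pmf (scan b SS G (l0 # ls) x) (Some l))"
    using a by (simp add: sum.insert)
  also have "pmf (scan b SS G (l0 # ls) (Alev SS G l0)) (Some l) = (if l = l0 then frac w else 0)"
    using pmf_refine_one_True[OF assms, of SS G l0]
    by (simp add: pmf_map_if_Some w_def)
  also have "(\<Sum>x\<in>{1..\<lfloor>w\<rfloor>}. pmf (scan b SS G (l0 # ls) x) (Some l))
      = (if l = l0 then of_int \<lfloor>w\<rfloor> else 0)"
    using a by (auto simp: pmf_return)
  finally show ?thesis
    by (simp add: w_def frac_def)
qed

lemma sum_pmf_scan:
  assumes "distinct ls" "b > 0"
  shows "(\<Sum>x\<in>{1..sum_list (map (Alev SS G) ls)}. pmf (scan b SS G ls x) (Some l))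
       = (if l \<in> set ls then Wlev SS l * 2 powr real_of_int G else 0)"
  using assms(1)
proof (induction ls)
  case Nil
  then show ?case by simp
next
  case (Cons l0 ls)
  define a where "a = Alev SS G l0"
  define T where "T = sum_list (map (Alev SS G) ls)"
  have "a \<ge> 0" "T \<ge> 0"
    unfolding a_def T_def by (auto simp: Alev_nonneg intro!: sum_list_nonneg)
  hence split: "{1..a + T} = {1..a} \<union> (\<lambda>x. x + a) ` {1..T}"
    by (auto simp: image_iff intro: bexI[where x = "_ - a"])
  have "(\<Sum>x\<in>{1..a + T}. pmf (scan b SS G (l0 # ls) x) (Some l))
      = (\<Sum>x\<in>{1..a}. pmf (scan b SS G (l0 # ls) x) (Some l))
        + (\<Sum>x\<in>(\<lambda>x. x + a) ` {1..T}. pmf (scan b SS G (l0 # ls) x) (Some l))"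
    unfolding split by (rule sum.union_disjoint) auto
  also have "(\<Sum>x\<in>(\<lambda>x. x + a) ` {1..T}. pmf (scan b SS G (l0 # ls) x) (Some l))
      = (\<Sum>x\<in>{1..T}. pmf (scan b SS G ls x) (Some l))"
    by (subst sum.reindex) (auto simp: inj_on_def a_def intro!: sum.cong)
  finally show ?case
    using Cons sum_pmf_scan_head[OF assms(2), of SS G l0 ls l] by (auto simp: a_def T_def)
qed

lemma sum_list_map_dropWhile:
  "(\<And>x. P x \<Longrightarrow> f x = 0) \<Longrightarrow> sum_list (map f (dropWhile P xs)) = sum_list (map f xs)"
  by (induction xs) auto

lemma in_set_dropWhileI: "x \<in> set xs \<Longrightarrow> \<not> P x \<Longrightarrow> x \<in> set (dropWhile P xs)"
  by (induction xs) auto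

lemma pmf_outer_iter_Some:
  assumes "b > 0" "Atot lo hi SS G > 0" "\<And>l. l \<notin> {lo..hi} \<Longrightarrow> SS l = 0"
  shows "pmf (outer_iter b lo hi SS G) (Some l)
       = Wlev SS l * 2 powr real_of_int G / Atot lo hi SS G"
proof -
  define ls where "ls = dropWhile (\<lambda>l. SS l = 0) (rev [lo..hi])"
  have "Atot lo hi SS G = sum_list (map (Alev SS G) (rev [lo..hi]))"
    unfolding Atot_def by (simp add: sum_list_distinct_conv_sum_set)
  also have "\<dots> = sum_list (map (Alev SS G) ls)"
    unfolding ls_def by (rule sum_list_map_dropWhile[symmetric]) (simp add: Alev_def)
  finally have A_ls: "Atot lo hi SS G = sum_list (map (Alev SS G) ls)" .
  have W_ls: "(if l \<in> set ls then Wlev SS l * 2 powr real_of_int G else 0)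
      = Wlev SS l * 2 powr real_of_int G"
    using assms(3)[of l] in_set_dropWhileI[of l "rev [lo..hi]" "\<lambda>l. SS l = 0"]
    by (cases "l \<in> {lo..hi}") (auto simp: ls_def Wlev_def)
  have "pmf (outer_iter b lo hi SS G) (Some l)
      = (\<Sum>x\<in>{1..Atot lo hi SS G}. pmf (scan b SS G ls x) (Some l)) / card {1..Atot lo hi SS G}"
    unfolding outer_iter_def ls_def using assms(2) by (subst pmf_bind_pmf_of_set) auto
  also have "\<dots> = Wlev SS l * 2 powr real_of_int G / Atot lo hi SS G"
    using assms(2) sum_pmf_scan[OF _ assms(1), of ls SS G l]
    unfolding W_ls A_ls[symmetric] by (simp add: ls_def distinct_dropWhile)
  finally show ?thesis .
qed

lemma prob_range_Some_eq_sum: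
  assumes "finite L" "\<And>x. x \<notin> L \<Longrightarrow> pmf p (Some x) = 0"
  shows "measure_pmf.prob p (range Some) = (\<Sum>x\<in>L. pmf p (Some x))"
proof -
  have "range Some \<inter> set_pmf p = Some ` L \<inter> set_pmf p"
  proof (intro equalityI subsetI)
    fix y assume y: "y \<in> range Some \<inter> set_pmf p"
    then obtain x where "y = Some x" "pmf p (Some x) \<noteq> 0"
      by (auto simp: set_pmf_iff)
    with assms(2) y show "y \<in> Some ` L \<inter> set_pmf p"
      by blast
  qed auto
  hence "measure_pmf.prob p (range Some) = measure_pmf.prob p (Some ` L)"
    using measure_Int_set_pmf[of p "range Some"] measure_Int_set_pmf[of p "Some ` L"] by simp
  also have "\<dots> = (\<Sum>x\<in>L. pmf p (Some x))"
    using assms(1) by (simp add: measure_measure_pmf_finite sum.reindex)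
  finally show ?thesis .
qed

lemma prob_outer_iter_accept:
  assumes "b > 0" "Atot lo hi SS G > 0" "\<And>l. l \<notin> {lo..hi} \<Longrightarrow> SS l = 0"
  shows "measure_pmf.prob (outer_iter b lo hi SS G) (range Some) = Mtot lo hi SS G / Atot lo hi SS G"
proof -
  have pmf_Some: "pmf (outer_iter b lo hi SS G) (Some l)
      = Wlev SS l * 2 powr real_of_int G / Atot lo hi SS G" for l
    by (rule pmf_outer_iter_Some[OF assms(1,2)]) (rule assms(3))
  have "measure_pmf.prob (outer_iter b lo hi SS G) (range Some)
      = (\<Sum>l\<in>{lo..hi}. pmf (outer_iter b lo hi SS G) (Some l))"
    by (rule prob_range_Some_eq_sum) (simp_all add: pmf_Some assms(3) Wlev_def del: atLeastAtMost_iff)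
  also have "\<dots> = (\<Sum>l\<in>{lo..hi}. Wlev SS l * 2 powr real_of_int G / Atot lo hi SS G)"
    by (rule sum.cong) (simp_all add: pmf_Some assms(3))
  also have "\<dots> = Mtot lo hi SS G / Atot lo hi SS G"
    by (simp add: Mtot_def sum_divide_distrib)
  finally show ?thesis .
qed

lemma Atot_pos:
  assumes "l \<in> {lo..hi}" "SS l > 0"
  shows "Atot lo hi SS G > 0"
proof -
  have "0 < Alev SS G l"
    using assms(2) by (simp add: Alev_def Wlev_def)
  also have "\<dots> \<le> Atot lo hi SS G"
    unfolding Atot_def using assms(1) by (intro member_le_sum Alev_nonneg) auto
  finally show ?thesis .
qed

lemma Atot_SSof_pos:
  assumes "\<forall>l\<in>{lo..hi}. \<forall>s\<in>#S l. s > 0" "(\<Sum>l\<in>{lo..hi}. size (S l)) \<noteq> 0"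
  shows "Atot lo hi (SSof lo hi S) G > 0"
proof -
  obtain l where l: "l \<in> {lo..hi}" "size (S l) \<noteq> 0"
    using assms(2) by (rule sum.not_neutral_contains_not_neutral)
  hence "S l \<noteq> {#}"
    by auto
  then obtain s where "s \<in># S l"
    by (rule multiset_nonemptyE)
  hence "sum_mset (S l) > 0"
    using assms(1) l(1) by (metis gr0I less_irrefl sum_mset_0_iff)
  thus ?thesis
    using l(1) by (intro Atot_pos[OF l(1)]) (simp add: SSof_def)
qed

theorem mainTheorem2:
  fixes b :: nat and lo hi G :: int and S :: "int \<Rightarrow> nat multiset"
  assumes "b \<ge> 2"
    and "lo \<le> hi"
    and "\<forall>l\<in>{lo..hi}. \<forall>s\<in>#S l. 2 ^ (b - 1) \<le> s \<and> s < 2 ^ b"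
    and "(\<Sum>l\<in>{lo..hi}. size (S l)) < 2 ^ b"
    and "(\<Sum>l\<in>{lo..hi}. size (S l)) \<ge> 1"
  shows "(\<forall>l. pmf (outer_iter b lo hi (SSof lo hi S) G) (Some l)
               = Wlev (SSof lo hi S) l * 2 powr real_of_int G / real_of_int (Atot lo hi (SSof lo hi S) G))
       \<and> measure_pmf.prob (outer_iter b lo hi (SSof lo hi S) G) (range Some)
               = Mtot lo hi (SSof lo hi S) G / real_of_int (Atot lo hi (SSof lo hi S) G)"
proof -
  have b_pos: "b > 0"
    using assms(1) by simp
  have "\<forall>l\<in>{lo..hi}. \<forall>s\<in>#S l. s > 0"
    using assms(3) by (meson less_le_trans zero_less_numeral zero_less_power)
  moreover have "(\<Sum>l\<in>{lo..hi}. size (S l)) \<noteq> 0"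
    using assms(5) by linarith
  ultimately have A_pos: "Atot lo hi (SSof lo hi S) G > 0"
    by (rule Atot_SSof_pos)
  have outside: "SSof lo hi S l = 0" if "l \<notin> {lo..hi}" for l
    using that by (auto simp: SSof_def)
  show ?thesis
    using pmf_outer_iter_Some[OF b_pos A_pos] prob_outer_iter_accept[OF b_pos A_pos] outside
    by blast
qed

end
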